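(* Let $u=u_1\ldots u_n\in\mathbb{P}^*$ have an increasing/decreasing factorization, and fix $1\le i\le n-1$. Let $\mathcal{S}^{(i)}(u)$ be the set of words $w=w_1\ldots w_m\in\mathbb{P}^*$ such that (i) $u$ embeds into the suffix $w_{m-n+1}\ldots w_m$ (i.e. $u\le w_{m-n+1}\ldots w_m$ letterwise), and (ii) the leftmost embedding of $u$ into $w$ occupies positions $m-2n+i+1,\ldots,m-n+i$ (so it overlaps the final $n$ positions in exactly $i$ positions). Let $S^{(i)}(u;t,x)=\sum_{w\in\mathcal{S}^{(i)}(u)}t^{|w|}x^{\Sigma(w)}$. Then, with $s_i=u_{i+1}\ldots u_n$, $$S^{(i)}(u;t,x)=S(u;t,x)\,t^{n-i}x^{d_i(u)+\Sigma(s_i)}\left(\frac{1}{1-x}\right)^{n-i}.$$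
   Context: $\mathbb{P}$ is the set of positive integers with the usual order, $\mathbb{P}^*$ the finite words over $\mathbb{P}$. For $w=w_1\ldots w_n$, $|w|=n$, $\Sigma(w)=\sum w_i$, $\mathrm{wt}(w)=t^{|w|}x^{\Sigma(w)}$. For words $u,w$, an embedding of $u$ into $w$ is a string $v$ of $|u|$ consecutive letters of $w$ whose $i$-th letter is $\ge$ the $i$-th letter of $u$ for every $i$; $u\le w$ means such an embedding exists. $\mathcal{S}(u)$ is the set of words $w$ with $u\le w$ such that the last $|u|$ letters of $w$ form the only embedding of $u$ into $w$, and $S(u;t,x)=\sum_{w\in\mathcal{S}(u)}\mathrm{wt}(w)$. $u=u_1\ldots u_n$ has an increasing/decreasing factorization if $u_1\le\cdots\le u_n$ or there is $k<n$ with $u_1\le\cdots\le u_k>u_{k+1}\ge\cdots\ge u_n$. $D^{(i)}(u)=\{n-i+j:1\le j\le i,\ u_j>u_{n-i+j}\}$ and $d_i(u)=\sum_{n-i+j\in D^{(i)}(u)}(u_j-u_{n-i+j})$. *)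

theory Defs
  imports "HOL-Computational_Algebra.Formal_Power_Series"
begin

definition pword :: "nat list \<Rightarrow> bool" where
  "pword w \<longleftrightarrow> (\<forall>a\<in>set w. 0 < a)"

text \<open>An embedding of u into w starting at (0-based) position j.\<close>
definition embeds_at :: "nat list \<Rightarrow> nat list \<Rightarrow> nat \<Rightarrow> bool" where
  "embeds_at u w j \<longleftrightarrow> j + length u \<le> length w \<and> (\<forall>k<length u. u ! k \<le> w ! (j + k))"

definition embeds :: "nat list \<Rightarrow> nat list \<Rightarrow> bool" where
  "embeds u w \<longleftrightarrow> (\<exists>j. embeds_at u w j)"

definition Sset :: "nat list \<Rightarrow> nat list set" where
  "Sset u = {w. pword w \<and> embeds u w \<and>
      (\<forall>j. embeds_at u w j \<longleftrightarrow> j = length w - length u)}"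

definition Siset :: "nat list \<Rightarrow> nat \<Rightarrow> nat list set" where
  "Siset u i = {w. pword w \<and> 2 * length u \<le> length w + i \<and>
      embeds_at u w (length w - length u) \<and>
      embeds_at u w (length w + i - 2 * length u) \<and>
      (\<forall>j < length w + i - 2 * length u. \<not> embeds_at u w j)}"

definition inc_dec_fact :: "nat list \<Rightarrow> bool" where
  "inc_dec_fact u \<longleftrightarrow> sorted u \<or>
     (\<exists>k. 1 \<le> k \<and> k < length u \<and> sorted (take k u) \<and> u ! (k - 1) > u ! k \<and>
          sorted_wrt (\<ge>) (drop k u))"

text \<open>d_i(u), with 0-based indices: sum over j<i of u_j - u_(n-i+j) where positive.\<close>
definition d_i :: "nat list \<Rightarrow> nat \<Rightarrow> nat" where
  "d_i u i = (\<Sum>j<i. if u ! j > u ! (length u - i + j) then u ! j - u ! (length u - i + j) else 0)"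

text \<open>Bivariate formal generating function \<Sum>_{w\<in>A} t^|w| x^\<Sigma>(w), represented as a power series
  in x whose coefficients are power series in t (for fixed \<Sigma>(w) only finitely many positive
  words exist, so coefficients are well defined cardinalities).\<close>
definition GF :: "nat list set \<Rightarrow> real fps fps" where
  "GF A = Abs_fps (\<lambda>N. Abs_fps (\<lambda>L. real (card {w\<in>A. length w = L \<and> sum_list w = N})))"

abbreviation xvar :: "real fps fps" where "xvar \<equiv> fps_X"
abbreviation tvar :: "real fps fps" where "tvar \<equiv> fps_const fps_X"

end

theory Submission
  imports Defs
begin

(* Put n = |u|.  A word of S^(i)(u) is exactly a word w' of S(u) followed
   by a block v of n - i letters dominating s_i = u_(i+1) ... u_n letterwise, where in
   addition the last i letters of w' dominate u_1 ... u_i (so that the final n letters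
   embed u).  Write T_i(u) for the set of such w'.

   1. Generating functions: a length-preserving bijection that adds d to the letter sum
      multiplies GF by x^d, and appending a block dominating a word s multiplies GF by
      t^|s| x^Sigma(s) (1/(1-x))^|s|.
   2. T_i(u) is in bijection with S(u): raise the j-th of the last i letters of w by
      max(0, u_j - u_(n-i+j)).  The total increase is d_i(u); the increasing/decreasing
      shape of u guarantees that raising creates no new embedding of u.
   3. S^(i)(u) = T_i(u) . (blocks dominating s_i); combining gives the formula. *)

section \<open>Generating functions of word sets\<close>

lemma GF_nth: "fps_nth (fps_nth (GF A) N) L = real (card {w\<in>A. length w = L \<and> sum_list w = N})"
  by (simp add: GF_def)

lemma finite_words_level: "finite {w\<in>B. length w = L \<and> sum_list (w::nat list) = N}"
proof (rule finite_subset)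
  show "{w\<in>B. length w = L \<and> sum_list w = N} \<subseteq> {xs. set xs \<subseteq> {0..N} \<and> length xs = L}"
    using member_le_sum_list by fastforce
  show "finite {xs. set xs \<subseteq> {0..N::nat} \<and> length xs = L}"
    by (rule finite_lists_length_eq) simp
qed

lemma GF_bij_shift:
  assumes bij: "bij_betw f B C"
    and len: "\<And>w. w \<in> B \<Longrightarrow> length (f w) = length w"
    and sum: "\<And>w. w \<in> B \<Longrightarrow> sum_list (f w) = sum_list w + d"
  shows "GF C = GF B * xvar ^ d"
proof (intro fps_ext)
  fix N L
  have rhs: "fps_nth (GF B * xvar ^ d) N = (if d \<le> N then fps_nth (GF B) (N - d) else 0)"
    by (simp add: fps_X_power_mult_right_nth)
  have level: "f ` {w\<in>B. length w = L \<and> sum_list w + d = N} = {w\<in>C. length w = L \<and> sum_list w = N}"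
  proof
    show "f ` {w\<in>B. length w = L \<and> sum_list w + d = N} \<subseteq> {w\<in>C. length w = L \<and> sum_list w = N}"
      using bij len sum by (auto simp: bij_betw_def)
    show "{w\<in>C. length w = L \<and> sum_list w = N} \<subseteq> f ` {w\<in>B. length w = L \<and> sum_list w + d = N}"
    proof
      fix c assume c: "c \<in> {w\<in>C. length w = L \<and> sum_list w = N}"
      then obtain b where "b \<in> B" "c = f b" using bij by (auto simp: bij_betw_def)
      then show "c \<in> f ` {w\<in>B. length w = L \<and> sum_list w + d = N}"
        using c len sum by auto
    qed
  qed
  have "inj_on f {w\<in>B. length w = L \<and> sum_list w + d = N}"
    using bij unfolding bij_betw_def by (elim conjE inj_on_subset) auto
  then have "card {w\<in>C. length w = L \<and> sum_list w = N} = card {w\<in>B. length w = L \<and> sum_list w + d = N}"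
    unfolding level[symmetric] by (rule card_image)
  also have "{w\<in>B. length w = L \<and> sum_list w + d = N} =
      (if d \<le> N then {w\<in>B. length w = L \<and> sum_list w = N - d} else {})"
    by auto
  finally have count: "card {w\<in>C. length w = L \<and> sum_list w = N} =
      (if d \<le> N then card {w\<in>B. length w = L \<and> sum_list w = N - d} else 0)"
    by simp
  show "fps_nth (fps_nth (GF C) N) L = fps_nth (fps_nth (GF B * xvar ^ d) N) L"
    unfolding rhs GF_nth count by (simp add: GF_nth)
qed

lemma inverse_one_minus_X: "inverse (1 - xvar) = Abs_fps (\<lambda>n. 1)"
proof -
  have "inverse (1 - xvar) = fps_right_inverse (1 - xvar) (inverse (fps_nth (1 - xvar) 0))"
    by (rule fps_inverse_def)
  also have "\<dots> = Abs_fps (\<lambda>n. 1)"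
    by (simp add: fps_lr_inverse_one_minus_fps_X(2))
  finally show ?thesis .
qed

text \<open>The generating function t x^c/(1-x) of a single letter a \<ge> c.\<close>
lemma letter_GF_nth: "fps_nth (tvar * xvar ^ c * inverse (1 - xvar)) n = (if c \<le> n then fps_X else 0)"
  by (simp add: inverse_one_minus_X mult.assoc fps_X_power_mult_nth)

text \<open>Counting form of appending one letter a \<ge> c: a word of length L+1 and sum N arises
  from a word of B of length L and sum k \<le> N - c, uniquely, by appending N - k.\<close>
lemma card_append_letter_level:
  fixes B :: "nat list set"
  shows "card {x \<in> {w @ [a] | w a. w \<in> B \<and> c \<le> a}. length x = Suc L \<and> sum_list x = N} =
     (\<Sum>k=0..N. if c \<le> N - k then card {w\<in>B. length w = L \<and> sum_list w = k} else 0)"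
  (is "card ?D = _")
proof -
  define K where "K = {k\<in>{0..N}. c \<le> N - k}"
  have split: "?D = (\<Union>k\<in>K. (\<lambda>w. w @ [N - k]) ` {w\<in>B. length w = L \<and> sum_list w = k})"
  proof
    show "?D \<subseteq> (\<Union>k\<in>K. (\<lambda>w. w @ [N - k]) ` {w\<in>B. length w = L \<and> sum_list w = k})"
    proof
      fix x assume "x \<in> ?D"
      then obtain w a where x: "x = w @ [a]" "w \<in> B" "c \<le> a" "length w = L" "sum_list w + a = N"
        by auto
      then have "sum_list w \<in> K" "a = N - sum_list w" by (auto simp: K_def)
      then show "x \<in> (\<Union>k\<in>K. (\<lambda>w. w @ [N - k]) ` {w\<in>B. length w = L \<and> sum_list w = k})"
        using x by auto
    qed
  qed (auto simp: K_def)
  have "card ?D = (\<Sum>k\<in>K. card ((\<lambda>w. w @ [N - k]) ` {w\<in>B. length w = L \<and> sum_list w = k}))"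
    unfolding split by (rule card_UN_disjoint) (auto simp: K_def finite_words_level)
  also have "\<dots> = (\<Sum>k\<in>K. card {w\<in>B. length w = L \<and> sum_list w = k})"
    by (rule sum.cong) (auto simp: card_image inj_on_def)
  also have "\<dots> = (\<Sum>k=0..N. if c \<le> N - k then card {w\<in>B. length w = L \<and> sum_list w = k} else 0)"
    unfolding K_def by (rule sum.inter_filter) simp
  finally show ?thesis .
qed

lemma GF_append_letter:
  "GF {w @ [a] | w a. w \<in> B \<and> c \<le> a} = GF B * (tvar * xvar ^ c * inverse (1 - xvar))"
  (is "GF ?D = GF B * ?G")
proof (intro fps_ext)
  fix N L
  have "fps_nth (GF B * ?G) N = (\<Sum>k=0..N. fps_nth (GF B) k * fps_nth ?G (N - k))"
    by (rule fps_mult_nth)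
  also have "\<dots> = (\<Sum>k=0..N. if c \<le> N - k then fps_nth (GF B) k * fps_X else 0)"
    by (rule sum.cong) (simp_all only: letter_GF_nth, simp)
  finally have rhs: "fps_nth (fps_nth (GF B * ?G) N) L =
      (\<Sum>k=0..N. fps_nth (if c \<le> N - k then fps_nth (GF B) k * fps_X else 0) L)"
    by (simp add: fps_sum_nth)
  show "fps_nth (fps_nth (GF ?D) N) L = fps_nth (fps_nth (GF B * ?G) N) L"
  proof (cases L)
    case 0
    then have none: "{w\<in>?D. length w = L \<and> sum_list w = N} = {}" by auto
    have zero: "(\<Sum>k=0..N. fps_nth (if c \<le> N - k then fps_nth (GF B) k * fps_X else 0) L) = 0"
      by (rule sum.neutral) (simp add: 0)
    show ?thesis unfolding GF_nth rhs none zero by simp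
  next
    case (Suc L')
    have "(\<Sum>k=0..N. fps_nth (if c \<le> N - k then fps_nth (GF B) k * fps_X else 0) L) =
        (\<Sum>k=0..N. if c \<le> N - k then real (card {w\<in>B. length w = L' \<and> sum_list w = k}) else 0)"
      by (rule sum.cong) (auto simp: GF_nth Suc)
    moreover have "real (card {w\<in>?D. length w = L \<and> sum_list w = N}) =
        (\<Sum>k=0..N. if c \<le> N - k then real (card {w\<in>B. length w = L' \<and> sum_list w = k}) else 0)"
      unfolding Suc card_append_letter_level of_nat_sum by (rule sum.cong) simp_all
    ultimately show ?thesis unfolding GF_nth rhs by simp
  qed
qed

definition extensions :: "nat list set \<Rightarrow> nat list \<Rightarrow> nat list set" where
  "extensions B s = {w @ v | w v. w \<in> B \<and> list_all2 (\<le>) s v}"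

lemma list_all2_snoc_left:
  "list_all2 P (s @ [c]) v \<longleftrightarrow> (\<exists>v' a. v = v' @ [a] \<and> list_all2 P s v' \<and> P c a)"
proof
  assume "list_all2 P (s @ [c]) v"
  then show "\<exists>v' a. v = v' @ [a] \<and> list_all2 P s v' \<and> P c a"
    by (auto simp: list_all2_append1 list_all2_Cons1)
next
  assume "\<exists>v' a. v = v' @ [a] \<and> list_all2 P s v' \<and> P c a"
  then show "list_all2 P (s @ [c]) v"
    by (auto intro: list_all2_appendI)
qed

lemma extensions_snoc:
  "extensions B (s @ [c]) = {w @ [a] | w a. w \<in> extensions B s \<and> c \<le> a}"
proof (intro set_eqI iffI)
  fix x assume "x \<in> extensions B (s @ [c])"
  then obtain w v' a where "x = (w @ v') @ [a]" "w \<in> B" "list_all2 (\<le>) s v'" "c \<le> a"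
    unfolding extensions_def list_all2_snoc_left by auto
  then show "x \<in> {w @ [a] | w a. w \<in> extensions B s \<and> c \<le> a}"
    unfolding extensions_def by blast
next
  fix x assume "x \<in> {w @ [a] | w a. w \<in> extensions B s \<and> c \<le> a}"
  then obtain w v' a where "x = w @ (v' @ [a])" "w \<in> B" "list_all2 (\<le>) s v'" "c \<le> a"
    unfolding extensions_def by auto
  then show "x \<in> extensions B (s @ [c])"
    unfolding extensions_def list_all2_snoc_left by blast
qed

lemma GF_extensions:
  "GF (extensions B s) =
     GF B * (tvar ^ length s * xvar ^ sum_list s * inverse (1 - xvar) ^ length s)"
proof (induction s rule: rev_induct)
  case Nil
  then show ?case by (simp add: extensions_def)
next
  case (snoc c s)
  show ?case
    unfolding extensions_snoc GF_append_letter snoc.IH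
    by (simp add: power_add mult_ac)
qed

lemma inc_dec_no_valley:
  assumes "inc_dec_fact u" "a < b" "b \<le> c" "c < length u" "u!b < u!a"
  shows "u!c \<le> u!b"
proof -
  from assms(1) consider "sorted u" | K where "K < length u" "sorted (take K u)"
     "sorted_wrt (\<ge>) (drop K u)" unfolding inc_dec_fact_def by blast
  then show ?thesis
  proof cases
    case 1
    then have "u!a \<le> u!b" using assms by (simp add: sorted_nth_mono)
    then show ?thesis using assms by simp
  next
    case 2
    show ?thesis
    proof (cases "b < K")
      case True
      have "take K u ! a \<le> take K u ! b"
        using 2(2) True assms by (intro sorted_nth_mono) auto
      then show ?thesis using True assms by simp
    next
      case False
      show ?thesis
      proof (cases "b = c")
        case False
        then have "drop K u ! (c - K) \<le> drop K u ! (b - K)"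
          using 2(3) \<open>\<not> b < K\<close> assms by (intro sorted_wrt_nth_less[of "(\<ge>)", simplified]) auto
        then show ?thesis using \<open>\<not> b < K\<close> assms by simp
      qed simp
    qed
  qed
qed

lemma pword_nth: "pword w \<longleftrightarrow> (\<forall>k<length w. 0 < w!k)"
  by (auto simp: pword_def in_set_conv_nth)

lemma embeds_at_append_left:
  "j + length u \<le> length w \<Longrightarrow> embeds_at u (w @ v) j \<longleftrightarrow> embeds_at u w j"
  by (auto simp: embeds_at_def nth_append)

lemma Sset_D:
  assumes "w \<in> Sset u"
  shows "pword w" "embeds_at u w (length w - length u)" "length u \<le> length w"
    "\<And>j. embeds_at u w j \<Longrightarrow> j = length w - length u"
  using assms unfolding Sset_def embeds_def embeds_at_def by auto

lemma Sset_I: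
  assumes "pword w" "embeds_at u w (length w - length u)"
    "\<And>j. embeds_at u w j \<Longrightarrow> j = length w - length u"
  shows "w \<in> Sset u"
  using assms unfolding Sset_def embeds_def by blast

lemma Sset_tail:
  assumes w: "w \<in> Sset u" and iu: "i < length u" and j: "j < i"
  shows "u!(length u - i + j) \<le> w!(length w - i + j)"
proof -
  have "\<forall>k<length u. u!k \<le> w!(length w - length u + k)"
    using Sset_D(2)[OF w] unfolding embeds_at_def by blast
  moreover have "length u - i + j < length u" using iu j by simp
  ultimately have "u!(length u - i + j) \<le> w!(length w - length u + (length u - i + j))"
    by blast
  moreover have "length w - length u + (length u - i + j) = length w - i + j"
    using Sset_D(3)[OF w] iu j by simp
  ultimately show ?thesis by simp
qed

section \<open>The overlap set T_i(u) and its bijection with S(u)\<close>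

text \<open>T_i(u): words of S(u) whose last i letters also dominate u_1 ... u_i, i.e. u fits
  over the last i letters as well.  These are the prefixes of words of S^(i)(u).\<close>
definition Sover :: "nat list \<Rightarrow> nat \<Rightarrow> nat list set" where
  "Sover u i = {w \<in> Sset u. \<forall>j<i. u!j \<le> w!(length w - i + j)}"

text \<open>The amount max(0, u_j - u_(n-i+j)) by which the j-th of the last i letters is raised;
  these amounts add up to d_i(u).\<close>
definition delta :: "nat list \<Rightarrow> nat \<Rightarrow> nat \<Rightarrow> nat" where
  "delta u i j = (if u ! j > u ! (length u - i + j) then u ! j - u ! (length u - i + j) else 0)"

definition raise :: "nat list \<Rightarrow> nat \<Rightarrow> nat list \<Rightarrow> nat list" where
  "raise u i w = map (\<lambda>k. if length w - i \<le> k then w!k + delta u i (k - (length w - i)) else w!k)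
     [0..<length w]"

definition lower :: "nat list \<Rightarrow> nat \<Rightarrow> nat list \<Rightarrow> nat list" where
  "lower u i w = map (\<lambda>k. if length w - i \<le> k then w!k - delta u i (k - (length w - i)) else w!k)
     [0..<length w]"

lemma length_raise [simp]: "length (raise u i w) = length w"
  by (simp add: raise_def)

lemma length_lower [simp]: "length (lower u i w) = length w"
  by (simp add: lower_def)

lemma nth_raise: "k < length w \<Longrightarrow> raise u i w ! k =
    (if length w - i \<le> k then w!k + delta u i (k - (length w - i)) else w!k)"
  by (simp add: raise_def)

lemma nth_lower: "k < length w \<Longrightarrow> lower u i w ! k =
    (if length w - i \<le> k then w!k - delta u i (k - (length w - i)) else w!k)"
  by (simp add: lower_def)

lemma lower_raise: "lower u i (raise u i w) = w"
  by (rule nth_equalityI) (auto simp: nth_lower nth_raise)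

text \<open>A raised letter
  at position m-i+j is only needed at offset k of an embedding if u_k > w_(m-i+j); but that
  letter dominates u_(n-i+j) < u_j, and k \<ge> n-i+j, so u_k \<le> u_(n-i+j) by the no-valley
  property.\<close>
lemma raise_embeds_at_imp:
  assumes idf: "inc_dec_fact u" and iu: "i < length u" and w: "w \<in> Sset u"
    and ej: "embeds_at u (raise u i w) j"
  shows "embeds_at u w j"
  unfolding embeds_at_def
proof (intro conjI allI impI)
  let ?n = "length u" and ?m = "length w"
  show jn: "j + ?n \<le> ?m" using ej by (simp add: embeds_at_def)
  fix k assume k: "k < ?n"
  have p: "j + k < ?m" using jn k by simp
  have ur: "u!k \<le> raise u i w ! (j + k)" using ej k by (simp add: embeds_at_def)
  show "u!k \<le> w!(j + k)"
  proof (cases "?m - i \<le> j + k \<and> delta u i (j + k - (?m - i)) > 0")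
    case False
    then have "raise u i w ! (j + k) = w ! (j + k)" using p by (auto simp: nth_raise)
    then show ?thesis using ur by simp
  next
    case True
    define l where "l = j + k - (?m - i)"
    have l: "l < i" "j + k = ?m - i + l" using True p Sset_D(3)[OF w] iu by (auto simp: l_def)
    have descent: "u!(?n - i + l) < u!l" using True by (simp add: l_def delta_def split: if_splits)
    have "?n - i + l \<le> k" using jn l iu by simp
    then have "u!k \<le> u!(?n - i + l)"
      using inc_dec_no_valley[OF idf _ _ k descent] l iu by simp
    also have "\<dots> \<le> w!(j + k)" using Sset_tail[OF w iu l(1)] l(2) by simp
    finally show ?thesis .
  qed
qed

lemma raise_in_Sover:
  assumes idf: "inc_dec_fact u" and iu: "i < length u" and w: "w \<in> Sset u"
  shows "raise u i w \<in> Sover u i"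
  unfolding Sover_def
proof (intro CollectI conjI allI impI)
  have ge: "w!k \<le> raise u i w ! k" if "k < length w" for k
    using that by (simp add: nth_raise)
  show "raise u i w \<in> Sset u"
  proof (rule Sset_I)
    show "pword (raise u i w)" using Sset_D(1)[OF w] ge unfolding pword_nth
      by (metis length_raise order_less_le_trans)
    show "embeds_at u (raise u i w) (length (raise u i w) - length u)"
      using Sset_D(2)[OF w] ge unfolding embeds_at_def by (auto intro: order_trans)
    show "j = length (raise u i w) - length u" if "embeds_at u (raise u i w) j" for j
      using Sset_D(4)[OF w raise_embeds_at_imp[OF idf iu w that]] by simp
  qed
  fix j assume j: "j < i"
  have "raise u i w ! (length w - i + j) = w!(length w - i + j) + delta u i j"
    using Sset_D(3)[OF w] iu j by (simp add: nth_raise)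
  then show "u!j \<le> raise u i w ! (length (raise u i w) - i + j)"
    using Sset_tail[OF w iu j] by (auto simp: delta_def) arith
qed

lemma Sover_tail:
  assumes w: "w \<in> Sover u i" and iu: "i < length u" and j: "j < i"
  shows "u!(length u - i + j) \<le> w!(length w - i + j) - delta u i j"
    and "delta u i j \<le> w!(length w - i + j)"
proof -
  have "w \<in> Sset u" and "u!j \<le> w!(length w - i + j)" using w j by (auto simp: Sover_def)
  with Sset_tail[OF this(1) iu j]
  show "u!(length u - i + j) \<le> w!(length w - i + j) - delta u i j"
    and "delta u i j \<le> w!(length w - i + j)"
    by (auto simp: delta_def)
qed

lemma lower_in_Sset:
  assumes pu: "pword u" and iu: "i < length u" and w: "w \<in> Sover u i"
  shows "lower u i w \<in> Sset u"
proof -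
  let ?n = "length u" and ?m = "length w" and ?l = "lower u i w"
  have wS: "w \<in> Sset u" using w by (simp add: Sover_def)
  note S = Sset_D[OF wS]
  have tail: "u!(?n - i + (k - (?m - i))) \<le> ?l ! k" if "?m - i \<le> k" "k < ?m" for k
  proof -
    have "k - (?m - i) < i" "?m - i + (k - (?m - i)) = k" using that by auto
    then show ?thesis using Sover_tail(1)[OF w iu] that by (metis nth_lower)
  qed
  show ?thesis
  proof (rule Sset_I)
    show "pword ?l" unfolding pword_nth
    proof (intro allI impI)
      fix k assume k: "k < length ?l"
      show "0 < ?l ! k"
      proof (cases "?m - i \<le> k")
        case True
        have "?n - i + (k - (?m - i)) < ?n" using True k iu by simp
        then have "0 < u!(?n - i + (k - (?m - i)))" using pu by (simp add: pword_nth)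
        then show ?thesis using tail[OF True] k by simp
      next
        case False then show ?thesis using k S(1) by (simp add: nth_lower pword_nth)
      qed
    qed
    show "embeds_at u ?l (length ?l - ?n)"
      unfolding embeds_at_def
    proof (intro conjI allI impI)
      show "length ?l - ?n + ?n \<le> length ?l" using S(3) by simp
      fix k assume k: "k < ?n"
      show "u!k \<le> ?l ! (length ?l - ?n + k)"
      proof (cases "?m - i \<le> ?m - ?n + k")
        case True
        have "?n - i + (?m - ?n + k - (?m - i)) = k" using True k iu S(3) by simp
        then show ?thesis using tail[OF True] k S(3) by simp
      next
        case False
        have "u!k \<le> w!(?m - ?n + k)" using S(2) k unfolding embeds_at_def by blast
        then show ?thesis using False k S(3) by (simp add: nth_lower)
      qed
    qed
    show "j = length ?l - ?n" if "embeds_at u ?l j" for j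
    proof -
      have "?l ! k \<le> w ! k" if "k < ?m" for k using that by (simp add: nth_lower)
      then have "embeds_at u w j" using \<open>embeds_at u ?l j\<close> unfolding embeds_at_def
        by (auto intro: order_trans)
      then show ?thesis using S(4) by simp
    qed
  qed
qed

lemma raise_lower:
  assumes iu: "i < length u" and w: "w \<in> Sover u i"
  shows "raise u i (lower u i w) = w"
proof (rule nth_equalityI)
  fix k assume k: "k < length (raise u i (lower u i w))"
  show "raise u i (lower u i w) ! k = w ! k"
  proof (cases "length w - i \<le> k")
    case True
    have "k - (length w - i) < i" "length w - i + (k - (length w - i)) = k" using True k by auto
    then show ?thesis using Sover_tail(2)[OF w iu] True k by (metis nth_lower nth_raise length_lower
          le_add_diff_inverse2 length_raise)
  next
    case False then show ?thesis using k by (simp add: nth_lower nth_raise)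
  qed
qed simp

lemma sum_list_raise:
  assumes "i \<le> length w"
  shows "sum_list (raise u i w) = sum_list w + d_i u i"
proof -
  let ?m = "length w"
  have "sum_list (raise u i w) = (\<Sum>k<?m. raise u i w ! k)"
    by (simp add: sum_list_sum_nth atLeast0LessThan)
  also have "\<dots> = (\<Sum>k<?m. w!k + (if ?m - i \<le> k then delta u i (k - (?m - i)) else 0))"
    by (rule sum.cong) (auto simp: nth_raise)
  also have "\<dots> = (\<Sum>k<?m. w!k) + (\<Sum>k<?m. if ?m - i \<le> k then delta u i (k - (?m - i)) else 0)"
    by (rule sum.distrib)
  also have "(\<Sum>k<?m. if ?m - i \<le> k then delta u i (k - (?m - i)) else 0) =
      (\<Sum>k\<in>{k\<in>{..<?m}. ?m - i \<le> k}. delta u i (k - (?m - i)))"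
    by (rule sum.inter_filter[symmetric]) simp
  also have "{k\<in>{..<?m}. ?m - i \<le> k} = {0 + (?m - i)..<i + (?m - i)}" using assms by auto
  also have "(\<Sum>k\<in>{0 + (?m - i)..<i + (?m - i)}. delta u i (k - (?m - i))) = (\<Sum>j<i. delta u i j)"
    by (subst sum.shift_bounds_nat_ivl) (simp add: atLeast0LessThan)
  finally show ?thesis by (simp add: sum_list_sum_nth atLeast0LessThan d_i_def delta_def)
qed

lemma GF_Sover:
  assumes idf: "inc_dec_fact u" and pu: "pword u" and iu: "i < length u"
  shows "GF (Sover u i) = GF (Sset u) * xvar ^ d_i u i"
proof (rule GF_bij_shift)
  show "bij_betw (raise u i) (Sset u) (Sover u i)"
    by (rule bij_betw_byWitness[where f' = "lower u i"])
      (use lower_raise raise_lower[OF iu] raise_in_Sover[OF idf iu] lower_in_Sset[OF pu iu] in auto)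
  fix w assume w: "w \<in> Sset u"
  show "length (raise u i w) = length w" by simp
  show "sum_list (raise u i w) = sum_list w + d_i u i"
    using Sset_D(3)[OF w] iu by (intro sum_list_raise) simp
qed

section \<open>Decomposition of S^(i)(u)\<close>

lemma list_all2_drop_iff:
  "list_all2 (\<le>) (drop i u) v \<longleftrightarrow> length v = length u - i \<and> (\<forall>l<length u - i. u!(i+l) \<le> v!l)"
  by (auto simp: list_all2_conv_all_nth)

lemma Siset_subset_extensions:
  assumes iu: "i < length u"
  shows "Siset u i \<subseteq> extensions (Sover u i) (drop i u)"
proof
  let ?n = "length u"
  fix w assume "w \<in> Siset u i"
  then have pw: "pword w" and len: "2 * ?n \<le> length w + i"
    and last: "embeds_at u w (length w - ?n)" and first: "embeds_at u w (length w + i - 2 * ?n)"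
    and before: "\<And>j. j < length w + i - 2 * ?n \<Longrightarrow> \<not> embeds_at u w j"
    unfolding Siset_def by blast+
  let ?m = "length w"
  define q where "q = ?m + i - ?n"
  define w' where "w' = take q w"
  define v where "v = drop q w"
  have w: "w = w' @ v" and lw': "length w' = q" and lv: "length v = ?n - i"
    using len iu by (auto simp: w'_def v_def q_def)
  have q: "q - ?n = ?m + i - 2 * ?n" "?n \<le> q" "?m - ?n + i = q" using len iu by (auto simp: q_def)
  have inside: "embeds_at u w j \<longleftrightarrow> embeds_at u w' j" if "j + ?n \<le> q" for j
    using embeds_at_append_left[of j u w' v] that by (simp add: w lw')
  have last_nth: "\<forall>k<?n. u!k \<le> w!(?m - ?n + k)" using last unfolding embeds_at_def by blast
  have "w' \<in> Sset u"
  proof (rule Sset_I)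
    show "pword w'" using pw unfolding pword_def w'_def by (meson in_set_takeD)
    show "embeds_at u w' (length w' - ?n)" using first inside[of "q - ?n"] q lw' by simp
    show "j = length w' - ?n" if "embeds_at u w' j" for j
    proof -
      have "j + ?n \<le> q" using that lw' by (simp add: embeds_at_def)
      moreover then have "\<not> j < q - ?n" using before inside that q by auto
      ultimately show ?thesis using lw' by simp
    qed
  qed
  moreover have "u!j \<le> w'!(length w' - i + j)" if "j < i" for j
  proof -
    have "u!j \<le> w!(?m - ?n + j)" using last_nth that iu by simp
    moreover have "?m - ?n + j < q" "length w' - i + j = ?m - ?n + j" using that q lw' by auto
    ultimately show ?thesis by (simp add: w nth_append lw')
  qed
  ultimately have "w' \<in> Sover u i" by (simp add: Sover_def)
  moreover have "u!(i+l) \<le> v!l" if "l < ?n - i" for l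
  proof -
    have "u!(i+l) \<le> w!(?m - ?n + (i + l))" using last_nth that by simp
    also have "?m - ?n + (i + l) = q + l" using q(3) by simp
    also have "w!(q + l) = v!l" unfolding w using lw' by (simp add: nth_append)
    finally show ?thesis .
  qed
  ultimately show "w \<in> extensions (Sover u i) (drop i u)"
    unfolding extensions_def list_all2_drop_iff using w lv by blast
qed

text \<open>Conversely, appending such a block to a word of T_i(u) gives a word of S^(i)(u): u fits
  over the last n letters, and the leftmost embedding is the one ending the prefix.\<close>
lemma extensions_subset_Siset:
  assumes pu: "pword u" and iu: "i < length u"
  shows "extensions (Sover u i) (drop i u) \<subseteq> Siset u i"
proof
  let ?n = "length u"
  fix x assume "x \<in> extensions (Sover u i) (drop i u)"
  then obtain w' v where x: "x = w' @ v" and w'T: "w' \<in> Sover u i" and lv: "length v = ?n - i"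
    and vdom: "\<forall>l<?n - i. u!(i+l) \<le> v!l"
    unfolding extensions_def list_all2_drop_iff by blast
  have w'S: "w' \<in> Sset u" and w'tail: "\<forall>j<i. u!j \<le> w'!(length w' - i + j)"
    using w'T by (auto simp: Sover_def)
  note S = Sset_D[OF w'S]
  let ?L = "length w'"
  have lx: "length x = ?L + (?n - i)" using x lv by simp
  have starts: "length x - ?n = ?L - i" "length x + i - 2 * ?n = ?L - ?n"
    using lx iu S(3) by auto
  have inside: "embeds_at u x j \<longleftrightarrow> embeds_at u w' j" if "j + ?n \<le> ?L" for j
    using embeds_at_append_left[OF that] by (simp add: x)
  have "pword x" unfolding pword_nth
  proof (intro allI impI)
    fix k assume k: "k < length x"
    show "0 < x!k"
    proof (cases "k < ?L")
      case True then show ?thesis using S(1) x by (simp add: nth_append pword_nth)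
    next
      case False
      have l: "k - ?L < ?n - i" using k False lx by simp
      then have "u!(i + (k - ?L)) \<le> v!(k - ?L)" "0 < u!(i + (k - ?L))"
        using vdom pu by (auto simp: pword_nth)
      then show ?thesis using x False by (simp add: nth_append)
    qed
  qed
  moreover have "embeds_at u x (length x - ?n)"
    unfolding embeds_at_def starts
  proof (intro conjI allI impI)
    show "?L - i + ?n \<le> length x" using lx iu S(3) by simp
    fix k assume k: "k < ?n"
    show "u!k \<le> x!(?L - i + k)"
    proof (cases "k < i")
      case True
      moreover have "?L - i + k < ?L" using True iu S(3) by simp
      ultimately show ?thesis using w'tail x by (simp add: nth_append)
    next
      case False
      have "k - i < ?n - i" using k False by simp
      then have "u!(i + (k - i)) \<le> v!(k - i)" using vdom by blast
      moreover have "x!(?L - i + k) = v!(k - i)"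
      proof -
        have "\<not> ?L - i + k < ?L" "?L - i + k - ?L = k - i" using False iu S(3) by auto
        then show ?thesis unfolding x nth_append by (simp only: if_False)
      qed
      ultimately show ?thesis using False by simp
    qed
  qed
  moreover have "embeds_at u x (length x + i - 2 * ?n)"
    using inside S(2,3) starts by simp
  moreover have "\<not> embeds_at u x j" if "j < length x + i - 2 * ?n" for j
    using that inside[of j] S(4)[of j] starts by auto
  moreover have "2 * ?n \<le> length x + i" using lx iu S(3) by simp
  ultimately show "x \<in> Siset u i" unfolding Siset_def by blast
qed

lemma Siset_eq_extensions:
  assumes "pword u" and "i < length u"
  shows "Siset u i = extensions (Sover u i) (drop i u)"
  using Siset_subset_extensions extensions_subset_Siset assms by (intro equalityI)

theorem lemma2:
  fixes u :: "nat list" and i :: nat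
  assumes "pword u" and "inc_dec_fact u" and "1 \<le> i" and "i < length u"
  shows "GF (Siset u i) =
    GF (Sset u) * tvar ^ (length u - i) * xvar ^ (d_i u i + sum_list (drop i u))
      * (inverse (1 - xvar)) ^ (length u - i)"
proof -
  have "GF (Siset u i) = GF (Sover u i) * (tvar ^ (length u - i) * xvar ^ sum_list (drop i u)
      * inverse (1 - xvar) ^ (length u - i))"
    using GF_extensions[of "Sover u i" "drop i u"] Siset_eq_extensions[OF assms(1,4)] by simp
  also have "GF (Sover u i) = GF (Sset u) * xvar ^ d_i u i"
    using GF_Sover assms by blast
  finally show ?thesis by (simp add: power_add mult_ac)
qed

end
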